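(* Let the prior joint distribution of the losses $(X,Y)$ be bivariate normal $\mathcal{N}(\boldsymbol{\mu},\boldsymbol{\Sigma})$ with $\boldsymbol{\mu}=(\mu_X,\mu_Y)^\top$, $\boldsymbol{\Sigma}=\begin{pmatrix}\sigma_X^2 & \rho\sigma_X\sigma_Y\\ \rho\sigma_X\sigma_Y & \sigma_Y^2\end{pmatrix}$, $\sigma_X,\sigma_Y>0$, $|\rho|<1$. Let $\mu_1\in\mathbb{R}$, $\alpha\in(0,1)$, and let $\tilde\mu_X$ denote the posterior expectation of $X$ (under the entropy-pooling posterior described in the context). (i) Under the equality view $\tilde\mu_X=\mu_1$, $$\mathrm{CoVaR}_\alpha^{Y|\tilde\mu_X=\mu_1}=\mu_Y+\rho(\mu_1-\mu_X)\frac{\sigma_Y}{\sigma_X}+\sigma_Y\Phi^{-1}(\alpha).$$ (ii) Under the inequality view $\tilde\mu_X\le\mu_1$: if $\mu_X\le\mu_1$, then $\mathrm{CoVaR}_\alpha^{Y|\tilde\mu_X\le\mu_1}=\mathrm{VaR}_\alpha^Y$; if $\mu_X>\mu_1$, then $\mathrm{CoVaR}_\alpha^{Y|\tilde\mu_X\le\mu_1}=\mathrm{CoVaR}_\alpha^{Y|\tilde\mu_X=\mu_1}$. (iii) Under the inequality view $\tilde\mu_X\ge\mu_1$: if $\mu_X\ge\mu_1$, then $\mathrm{CoVaR}_\alpha^{Y|\tilde\mu_X\ge\mu_1}=\mathrm{VaR}_\alpha^Y$; if $\mu_X<\mu_1$, then $\mathrm{CoVaR}_\alpha^{Y|\tild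e\mu_X\ge\mu_1}=\mathrm{CoVaR}_\alpha^{Y|\tilde\mu_X=\mu_1}$.
   Context: Entropy-pooling framework: given a "view" $V$ (a constraint on the posterior parameters), the posterior distribution of $(X,Y)$ is the bivariate normal distribution $\mathcal{N}(\tilde{\boldsymbol{\mu}},\tilde{\boldsymbol{\Sigma}})$, with $\tilde{\boldsymbol{\mu}}=(\tilde\mu_X,\tilde\mu_Y)^\top$ and nonsingular $\tilde{\boldsymbol{\Sigma}}=\begin{pmatrix}\tilde\sigma_X^2 & \tilde\rho\tilde\sigma_X\tilde\sigma_Y\\ \tilde\rho\tilde\sigma_X\tilde\sigma_Y & \tilde\sigma_Y^2\end{pmatrix}$, that minimizes the relative entropy (Kullback–Leibler divergence) $\varepsilon(\tilde f,f)=\int \tilde f\,(\ln\tilde f-\ln f)$ of its density $\tilde f$ with respect to the prior density $f$, among all bivariate normal distributions satisfying $V$. The general CoVaR under view $V$ is the $\alpha$-quantile of the posterior marginal of $Y$: $\mathrm{CoVaR}_\alpha^{Y|V}=\tilde\mu_Y+\tilde\sigma_Y\Phi^{-1}(\alpha)$, where $\Phi$ is the standard normal cdf. $\mathrm{VaR}_\alpha^Y=\mu_Y+\sigma_Y\Phi^{-1}(\alpha)$ is the prior $\alpha$-quantile of $Y$. *)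

theory Defs
  imports "HOL-Probability.Probability"
begin

text \<open>Parameters of a bivariate normal distribution N(mu, Sigma) with
  mu = (mX, mY), Sigma = ((sX^2, rho sX sY), (rho sX sY, sY^2)).\<close>
record bvn =
  mX :: real
  mY :: real
  sX :: real
  sY :: real
  rho :: real

definition valid_bvn :: "bvn \<Rightarrow> bool" where
  "valid_bvn p \<longleftrightarrow> sX p > 0 \<and> sY p > 0 \<and> \<bar>rho p\<bar> < 1"

definition bvn_density :: "bvn \<Rightarrow> real \<times> real \<Rightarrow> real" where
  "bvn_density p z = (case z of (x, y) \<Rightarrow>
     exp (- (1 / (2 * (1 - (rho p)\<^sup>2))) *
            ((x - mX p)\<^sup>2 / (sX p)\<^sup>2
             - 2 * rho p * (x - mX p) * (y - mY p) / (sX p * sY p)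
             + (y - mY p)\<^sup>2 / (sY p)\<^sup>2))
     / (2 * pi * sX p * sY p * sqrt (1 - (rho p)\<^sup>2)))"

definition rel_entropy :: "bvn \<Rightarrow> bvn \<Rightarrow> real" where
  "rel_entropy q p =
     integral\<^sup>L lborel (\<lambda>z. bvn_density q z * (ln (bvn_density q z) - ln (bvn_density p z)))"

definition is_posterior :: "bvn \<Rightarrow> (bvn \<Rightarrow> bool) \<Rightarrow> bvn \<Rightarrow> bool" where
  "is_posterior p V q \<longleftrightarrow> valid_bvn q \<and> V q \<and>
     (\<forall>q'. valid_bvn q' \<and> V q' \<longrightarrow> rel_entropy q p \<le> rel_entropy q' p)"

definition Phi :: "real \<Rightarrow> real" where
  "Phi x = (LBINT t:{..x}. std_normal_density t)"

definition Phi_inv :: "real \<Rightarrow> real" where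
  "Phi_inv a = (THE x. Phi x = a)"

definition VaR :: "real \<Rightarrow> bvn \<Rightarrow> real" where
  "VaR \<alpha> p = mY p + sY p * Phi_inv \<alpha>"

text \<open>General CoVaR: alpha-quantile of the posterior marginal of Y.\<close>
definition CoVaR_post :: "real \<Rightarrow> bvn \<Rightarrow> real" where
  "CoVaR_post \<alpha> q = mY q + sY q * Phi_inv \<alpha>"

definition CoVaR_is :: "real \<Rightarrow> bvn \<Rightarrow> (bvn \<Rightarrow> bool) \<Rightarrow> real \<Rightarrow> bool" where
  "CoVaR_is \<alpha> p V c \<longleftrightarrow> (\<exists>q. is_posterior p V q) \<and>
     (\<forall>q. is_posterior p V q \<longrightarrow> CoVaR_post \<alpha> q = c)"

end

theory Submission
  imports Defs
begin

(* Factorising the bivariate normal density into the normal marginal of X and the normal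
   conditional law of Y given X reduces the relative entropy to second moments, which gives it
   in closed form.  For a nonsingular prior p and a bivariate normal q it splits into three
   nonnegative parts: a part depending only on the covariances, which vanishes iff q has the
   covariance of p; a multiple of the squared distance of the Y-mean of q from the regression
   line of Y on X of p, taken at the X-mean of q; and ((mu~_X - mu_X)/sigma_X)^2/2.
   For a view on mu~_X whose feasible set has a unique point m nearest to mu_X, the posterior
   is therefore unique: it keeps the covariance of p, sets mu~_X = m and puts mu~_Y on the
   regression line, mu~_Y = mu_Y + rho sigma_Y/sigma_X (m - mu_X).  The nearest point is mu1
   for the equality view, and for an inequality view it is mu_X if the prior satisfies the
   view and mu1 otherwise. *)

lemma has_bochner_integral_normal_density_quadratic:
  fixes \<mu> \<sigma> A B C :: real
  assumes "0 < \<sigma>"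
  shows "has_bochner_integral lborel
           (\<lambda>x. normal_density \<mu> \<sigma> x * (A + B * (x - \<mu>) + C * (x - \<mu>)\<^sup>2)) (A + C * \<sigma>\<^sup>2)"
proof -
  have "fact (2 * 1) / ((2 / \<sigma>\<^sup>2) ^ 1 * fact 1) = \<sigma>\<^sup>2"
    using assms by simp
  then have "has_bochner_integral lborel (\<lambda>x. A * normal_density \<mu> \<sigma> x
          + B * (normal_density \<mu> \<sigma> x * (x - \<mu>)) + C * (normal_density \<mu> \<sigma> x * (x - \<mu>)\<^sup>2))
          (A * 1 + B * 0 + C * \<sigma>\<^sup>2)"
    using normal_moment_even[OF assms, where k = 0 and \<mu> = \<mu>]
      normal_moment_odd[OF assms, where k = 0 and \<mu> = \<mu>]
      normal_moment_even[OF assms, where k = 1 and \<mu> = \<mu>]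
    by (intro has_bochner_integral_add has_bochner_integral_mult_right) simp_all
  then show ?thesis
    by (simp add: algebra_simps)
qed

definition cond_mean :: "bvn \<Rightarrow> real \<Rightarrow> real" where
  "cond_mean p x = mY p + rho p * sY p / sX p * (x - mX p)"

definition cond_sd :: "bvn \<Rightarrow> real" where
  "cond_sd p = sY p * sqrt (1 - (rho p)\<^sup>2)"

lemma valid_bvn_one_minus_rho_sq_pos: "valid_bvn p \<Longrightarrow> 0 < 1 - (rho p)\<^sup>2"
  by (simp add: valid_bvn_def abs_square_less_1)

lemma cond_sd_pos: "valid_bvn p \<Longrightarrow> 0 < cond_sd p"
  using valid_bvn_one_minus_rho_sq_pos[of p] by (simp add: cond_sd_def valid_bvn_def)

lemma bvn_density_factorization:
  assumes "valid_bvn p"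
  shows "bvn_density p (x, y) = normal_density (mX p) (sX p) x * normal_density (cond_mean p x) (cond_sd p) y"
proof -
  define u where "u = (x - mX p) / sX p"
  define v where "v = (y - mY p) / sY p"
  have sx: "0 < sX p" and sy: "0 < sY p" and r: "0 < 1 - (rho p)\<^sup>2"
    using assms valid_bvn_one_minus_rho_sq_pos by (auto simp: valid_bvn_def)
  have sq: "(sqrt (1 - (rho p)\<^sup>2))\<^sup>2 = 1 - (rho p)\<^sup>2"
    using r by simp
  have x: "x - mX p = sX p * u" and y: "y - mY p = sY p * v"
    and y': "y - cond_mean p x = sY p * (v - rho p * u)"
    using sx sy by (simp_all add: u_def v_def cond_mean_def field_simps)
  have expo: "- (1 / (2 * (1 - (rho p)\<^sup>2))) * ((x - mX p)\<^sup>2 / (sX p)\<^sup>2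
          - 2 * rho p * (x - mX p) * (y - mY p) / (sX p * sY p) + (y - mY p)\<^sup>2 / (sY p)\<^sup>2)
        = - (x - mX p)\<^sup>2 / (2 * (sX p)\<^sup>2) + - (y - cond_mean p x)\<^sup>2 / (2 * (cond_sd p)\<^sup>2)"
    unfolding x y y' cond_sd_def power_mult_distrib sq using sx sy r
    by (simp add: field_simps) (simp add: power2_eq_square power4_eq_xxxx algebra_simps)
  have norm: "2 * pi * sX p * sY p * sqrt (1 - (rho p)\<^sup>2)
      = sqrt (2 * pi * (sX p)\<^sup>2) * sqrt (2 * pi * (cond_sd p)\<^sup>2)"
  proof -
    have "sqrt (2 * pi * s\<^sup>2) = sqrt (2 * pi) * s" if "0 < s" for s :: real
      using that by (simp add: real_sqrt_mult)
    then have "sqrt (2 * pi * (sX p)\<^sup>2) * sqrt (2 * pi * (cond_sd p)\<^sup>2)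
        = (sqrt (2 * pi))\<^sup>2 * sX p * cond_sd p"
      using sx cond_sd_pos[OF assms] by (simp add: power2_eq_square)
    then show ?thesis
      by (simp add: cond_sd_def mult_ac)
  qed
  show ?thesis
    unfolding bvn_density_def prod.case expo norm exp_add normal_density_def by simp
qed

definition quad ::
    "real \<Rightarrow> real \<Rightarrow> real \<Rightarrow> real \<Rightarrow> real \<Rightarrow> real \<Rightarrow> real \<times> real \<Rightarrow> real" where
  "quad a b c cxx cxy cyy z =
     c + cxx * (fst z - a)\<^sup>2 + cxy * (fst z - a) * (snd z - b) + cyy * (snd z - b)\<^sup>2"

definition bvn_quad_mean ::
    "bvn \<Rightarrow> real \<Rightarrow> real \<Rightarrow> real \<Rightarrow> real \<Rightarrow> real \<Rightarrow> real \<Rightarrow> real" where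
  "bvn_quad_mean q a b c cxx cxy cyy =
     c + cxx * ((sX q)\<^sup>2 + (mX q - a)\<^sup>2)
       + cxy * (rho q * sX q * sY q + (mX q - a) * (mY q - b))
       + cyy * ((sY q)\<^sup>2 + (mY q - b)\<^sup>2)"

lemma bvn_density_nonneg: "valid_bvn p \<Longrightarrow> 0 \<le> bvn_density p z"
  by (cases z) (simp add: bvn_density_factorization)

lemma borel_measurable_bvn_density [measurable]:
  "bvn_density p \<in> borel_measurable (lborel \<Otimes>\<^sub>M lborel)"
  unfolding bvn_density_def case_prod_beta by measurable

lemma borel_measurable_quad [measurable]:
  "quad a b c cxx cxy cyy \<in> borel_measurable (lborel \<Otimes>\<^sub>M lborel)"
  unfolding quad_def by measurable

lemma has_bochner_integral_bvn_quad_section: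
  assumes "valid_bvn q"
  shows "has_bochner_integral lborel (\<lambda>y. bvn_density q (x, y) * quad a b c cxx cxy cyy (x, y))
           (normal_density (mX q) (sX q) x
              * (quad a b c cxx cxy cyy (x, cond_mean q x) + cyy * (cond_sd q)\<^sup>2))"
proof -
  define m where "m = cond_mean q x"
  define A where "A = quad a b c cxx cxy cyy (x, m)"
  define B where "B = cxy * (x - a) + 2 * cyy * (m - b)"
  have "quad a b c cxx cxy cyy (x, y) = A + B * (y - m) + cyy * (y - m)\<^sup>2" for y
    unfolding quad_def A_def B_def by (simp add: power2_eq_square algebra_simps)
  then have "(\<lambda>y. bvn_density q (x, y) * quad a b c cxx cxy cyy (x, y))
      = (\<lambda>y. normal_density (mX q) (sX q) x
               * (normal_density m (cond_sd q) y * (A + B * (y - m) + cyy * (y - m)\<^sup>2)))"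
    by (simp add: fun_eq_iff bvn_density_factorization[OF assms] m_def)
  then show ?thesis
    using has_bochner_integral_mult_right[OF has_bochner_integral_normal_density_quadratic[OF cond_sd_pos[OF assms]]]
    by (simp add: A_def m_def)
qed

lemma has_bochner_integral_bvn_quad_iterated:
  assumes "valid_bvn q"
  shows "has_bochner_integral lborel
           (\<lambda>x. normal_density (mX q) (sX q) x
                  * (quad a b c cxx cxy cyy (x, cond_mean q x) + cyy * (cond_sd q)\<^sup>2))
           (bvn_quad_mean q a b c cxx cxy cyy)"
proof -
  define k where "k = rho q * sY q / sX q"
  define A where "A = quad a b c cxx cxy cyy (mX q, mY q) + cyy * (cond_sd q)\<^sup>2"
  define B where "B = 2 * cxx * (mX q - a) + cxy * ((mX q - a) * k + (mY q - b)) + 2 * cyy * k * (mY q - b)"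
  define C where "C = cxx + cxy * k + cyy * k\<^sup>2"
  have sx: "0 < sX q" and r: "0 < 1 - (rho q)\<^sup>2"
    using assms valid_bvn_one_minus_rho_sq_pos by (auto simp: valid_bvn_def)
  have cm: "cond_mean q x = mY q + k * (x - mX q)" for x
    by (simp add: cond_mean_def k_def)
  have "quad a b c cxx cxy cyy (x, cond_mean q x) + cyy * (cond_sd q)\<^sup>2
      = A + B * (x - mX q) + C * (x - mX q)\<^sup>2" for x
    unfolding A_def B_def C_def quad_def cm by (simp add: power2_eq_square algebra_simps)
  moreover have "A + C * (sX q)\<^sup>2 = bvn_quad_mean q a b c cxx cxy cyy"
  proof -
    have "C * (sX q)\<^sup>2 = cxx * (sX q)\<^sup>2 + cxy * (k * (sX q)\<^sup>2) + cyy * (k * sX q)\<^sup>2"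
      by (simp add: C_def power2_eq_square algebra_simps)
    also have "\<dots> = cxx * (sX q)\<^sup>2 + cxy * (rho q * sX q * sY q) + cyy * (rho q * sY q)\<^sup>2"
      using sx by (simp add: k_def power2_eq_square)
    finally show ?thesis
      using r unfolding A_def quad_def bvn_quad_mean_def cond_sd_def
      by (simp add: power_mult_distrib algebra_simps)
  qed
  ultimately show ?thesis
    using has_bochner_integral_normal_density_quadratic[OF sx, of "mX q" A B C] by simp
qed

lemma integrable_bvn_quad_nonneg:
  assumes q: "valid_bvn q" and nonneg: "\<And>z. 0 \<le> quad a b c cxx cxy cyy z"
  shows "integrable (lborel \<Otimes>\<^sub>M lborel) (\<lambda>z. bvn_density q z * quad a b c cxx cxy cyy z)"
proof (rule lborel_pair.Fubini_integrable)
  show "(\<lambda>z. bvn_density q z * quad a b c cxx cxy cyy z) \<in> borel_measurable (lborel \<Otimes>\<^sub>M lborel)"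
    by measurable
  have "(\<integral>y. norm (bvn_density q (x, y) * quad a b c cxx cxy cyy (x, y)) \<partial>lborel)
      = normal_density (mX q) (sX q) x * (quad a b c cxx cxy cyy (x, cond_mean q x) + cyy * (cond_sd q)\<^sup>2)"
    for x
    using has_bochner_integral_integral_eq[OF has_bochner_integral_bvn_quad_section[OF q]]
      bvn_density_nonneg[OF q] nonneg
    by simp
  then show "integrable lborel (\<lambda>x. \<integral>y. norm (bvn_density q (x, y) * quad a b c cxx cxy cyy (x, y)) \<partial>lborel)"
    using has_bochner_integral_bvn_quad_iterated[OF q] by (simp add: has_bochner_integral_iff)
  show "AE x in lborel. integrable lborel (\<lambda>y. bvn_density q (x, y) * quad a b c cxx cxy cyy (x, y))"
    using has_bochner_integral_bvn_quad_section[OF q] by (simp add: has_bochner_integral_iff)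
qed

lemma abs_quad_le:
  fixes a b c cxx cxy cyy :: real
  defines "K \<equiv> \<bar>c\<bar> + \<bar>cxx\<bar> + \<bar>cxy\<bar> + \<bar>cyy\<bar>"
  shows "\<bar>quad a b c cxx cxy cyy z\<bar> \<le> quad a b K K 0 K z"
proof -
  define u where "u = fst z - a"
  define v where "v = snd z - b"
  have "2 * \<bar>u * v\<bar> \<le> u\<^sup>2 + v\<^sup>2"
    using sum_squares_bound[of "\<bar>u\<bar>" "\<bar>v\<bar>"] by (simp add: abs_mult mult.assoc)
  then have "\<bar>u * v\<bar> \<le> u\<^sup>2 + v\<^sup>2"
    using abs_ge_zero[of "u * v"] by linarith
  then have "\<bar>cxy\<bar> * \<bar>u * v\<bar> \<le> \<bar>cxy\<bar> * u\<^sup>2 + \<bar>cxy\<bar> * v\<^sup>2"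
    by (simp add: mult_left_mono flip: distrib_left)
  moreover have "\<bar>c + cxx * u\<^sup>2 + cxy * (u * v) + cyy * v\<^sup>2\<bar>
      \<le> \<bar>c\<bar> + \<bar>cxx * u\<^sup>2\<bar> + \<bar>cxy * (u * v)\<bar> + \<bar>cyy * v\<^sup>2\<bar>"
    by arith
  then have "\<bar>c + cxx * u\<^sup>2 + cxy * (u * v) + cyy * v\<^sup>2\<bar>
      \<le> \<bar>c\<bar> + \<bar>cxx\<bar> * u\<^sup>2 + \<bar>cxy\<bar> * \<bar>u * v\<bar> + \<bar>cyy\<bar> * v\<^sup>2"
    by (simp only: abs_mult abs_power2)
  moreover have "\<bar>cxx\<bar> * u\<^sup>2 + \<bar>cxy\<bar> * u\<^sup>2 \<le> K * u\<^sup>2"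
    "\<bar>cxy\<bar> * v\<^sup>2 + \<bar>cyy\<bar> * v\<^sup>2 \<le> K * v\<^sup>2" "\<bar>c\<bar> \<le> K"
    unfolding K_def by (simp_all add: mult_right_mono flip: distrib_right)
  moreover have "quad a b c cxx cxy cyy z = c + cxx * u\<^sup>2 + cxy * (u * v) + cyy * v\<^sup>2"
    "quad a b K K 0 K z = K + K * u\<^sup>2 + K * v\<^sup>2"
    unfolding quad_def u_def v_def by simp_all
  ultimately show ?thesis
    by linarith
qed

lemma integrable_bvn_quad:
  assumes q: "valid_bvn q"
  shows "integrable (lborel \<Otimes>\<^sub>M lborel) (\<lambda>z. bvn_density q z * quad a b c cxx cxy cyy z)"
proof (rule Bochner_Integration.integrable_bound)
  define K where "K = \<bar>c\<bar> + \<bar>cxx\<bar> + \<bar>cxy\<bar> + \<bar>cyy\<bar>"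
  have bound: "\<bar>quad a b c cxx cxy cyy z\<bar> \<le> quad a b K K 0 K z" for z
    unfolding K_def by (rule abs_quad_le)
  then show "integrable (lborel \<Otimes>\<^sub>M lborel) (\<lambda>z. bvn_density q z * quad a b K K 0 K z)"
    by (intro integrable_bvn_quad_nonneg[OF q]) (rule order_trans[OF abs_ge_zero])
  show "(\<lambda>z. bvn_density q z * quad a b c cxx cxy cyy z) \<in> borel_measurable (lborel \<Otimes>\<^sub>M lborel)"
    by measurable
  show "AE z in lborel \<Otimes>\<^sub>M lborel.
          norm (bvn_density q z * quad a b c cxx cxy cyy z) \<le> norm (bvn_density q z * quad a b K K 0 K z)"
  proof (intro AE_I2)
    fix z
    show "norm (bvn_density q z * quad a b c cxx cxy cyy z) \<le> norm (bvn_density q z * quad a b K K 0 K z)"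
      using bound[of z] order_trans[OF abs_ge_zero bound[of z]] bvn_density_nonneg[OF q, of z]
      by (simp add: abs_mult mult_left_mono)
  qed
qed

lemma has_bochner_integral_bvn_quad:
  assumes q: "valid_bvn q"
  shows "has_bochner_integral lborel (\<lambda>z. bvn_density q z * quad a b c cxx cxy cyy z)
           (bvn_quad_mean q a b c cxx cxy cyy)"
proof -
  have "integral\<^sup>L (lborel \<Otimes>\<^sub>M lborel) (\<lambda>z. bvn_density q z * quad a b c cxx cxy cyy z)
      = (\<integral>x. (\<integral>y. bvn_density q (x, y) * quad a b c cxx cxy cyy (x, y) \<partial>lborel) \<partial>lborel)"
    using lborel_pair.integral_fst'[OF integrable_bvn_quad[OF q]] by simp
  also have "\<dots> = bvn_quad_mean q a b c cxx cxy cyy"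
    using has_bochner_integral_integral_eq[OF has_bochner_integral_bvn_quad_section[OF q]]
      has_bochner_integral_integral_eq[OF has_bochner_integral_bvn_quad_iterated[OF q]]
    by simp
  finally show ?thesis
    using integrable_bvn_quad[OF q] by (simp add: has_bochner_integral_iff lborel_prod)
qed

definition bvn_norm :: "bvn \<Rightarrow> real" where
  "bvn_norm p = 2 * pi * sX p * sY p * sqrt (1 - (rho p)\<^sup>2)"

definition bvn_form :: "bvn \<Rightarrow> real \<times> real \<Rightarrow> real" where
  "bvn_form p = quad (mX p) (mY p) 0 (1 / (2 * (1 - (rho p)\<^sup>2) * (sX p)\<^sup>2))
     (- rho p / ((1 - (rho p)\<^sup>2) * sX p * sY p)) (1 / (2 * (1 - (rho p)\<^sup>2) * (sY p)\<^sup>2))"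

lemma bvn_norm_pos: "valid_bvn p \<Longrightarrow> 0 < bvn_norm p"
  using valid_bvn_one_minus_rho_sq_pos[of p] by (simp add: bvn_norm_def valid_bvn_def)

lemma ln_bvn_density:
  assumes "valid_bvn p"
  shows "ln (bvn_density p z) = - ln (bvn_norm p) - bvn_form p z"
proof -
  obtain x y where z: "z = (x, y)"
    by fastforce
  define D where "D = 1 - (rho p)\<^sup>2"
  define X where "X = x - mX p"
  define Y where "Y = y - mY p"
  have "sX p \<noteq> 0" "sY p \<noteq> 0" "D \<noteq> 0"
    using assms valid_bvn_one_minus_rho_sq_pos[OF assms] by (auto simp: valid_bvn_def D_def)
  then have "bvn_form p z = (1 / (2 * (1 - (rho p)\<^sup>2))) * ((x - mX p)\<^sup>2 / (sX p)\<^sup>2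
          - 2 * rho p * (x - mX p) * (y - mY p) / (sX p * sY p) + (y - mY p)\<^sup>2 / (sY p)\<^sup>2)"
    unfolding z bvn_form_def quad_def fst_conv snd_conv
    unfolding D_def[symmetric] X_def[symmetric] Y_def[symmetric]
    by (simp add: field_simps)
  then have "bvn_density p z = exp (- bvn_form p z) / bvn_norm p"
    by (simp add: bvn_density_def bvn_norm_def z)
  then show ?thesis
    using bvn_norm_pos[OF assms] by (simp add: ln_div)
qed

lemma has_bochner_integral_bvn_density:
  "valid_bvn q \<Longrightarrow> has_bochner_integral lborel (bvn_density q) 1"
  using has_bochner_integral_bvn_quad[of q 0 0 1 0 0 0] by (simp add: quad_def bvn_quad_mean_def)

lemma has_bochner_integral_bvn_form:
  assumes p: "valid_bvn p" and q: "valid_bvn q"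
  shows "has_bochner_integral lborel (\<lambda>z. bvn_density q z * bvn_form p z)
    (((sX q / sX p)\<^sup>2 - 2 * rho p * rho q * (sX q / sX p) * (sY q / sY p) + (sY q / sY p)\<^sup>2)
        / (2 * (1 - (rho p)\<^sup>2))
     + ((mY q - mY p) / sY p - rho p * ((mX q - mX p) / sX p))\<^sup>2 / (2 * (1 - (rho p)\<^sup>2))
     + ((mX q - mX p) / sX p)\<^sup>2 / 2)"
proof -
  define D where "D = 1 - (rho p)\<^sup>2"
  define a where "a = sX q / sX p"
  define b where "b = sY q / sY p"
  define u where "u = (mX q - mX p) / sX p"
  define v where "v = (mY q - mY p) / sY p"
  have sx: "sX p \<noteq> 0" and sy: "sY p \<noteq> 0" and D: "D \<noteq> 0"
    using p valid_bvn_one_minus_rho_sq_pos[OF p] by (auto simp: valid_bvn_def D_def)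
  have q_params: "sX q = sX p * a" "sY q = sY p * b" "mX q - mX p = sX p * u" "mY q - mY p = sY p * v"
    using sx sy by (simp_all add: a_def b_def u_def v_def)
  have terms: "1 / (2 * D * (sX p)\<^sup>2) * ((sX p * a)\<^sup>2 + (sX p * u)\<^sup>2) = (a\<^sup>2 + u\<^sup>2) / (2 * D)"
    "- rho p / (D * sX p * sY p) * (rho q * (sX p * a) * (sY p * b) + sX p * u * (sY p * v))
       = - 2 * rho p * (rho q * a * b + u * v) / (2 * D)"
    "1 / (2 * D * (sY p)\<^sup>2) * ((sY p * b)\<^sup>2 + (sY p * v)\<^sup>2) = (b\<^sup>2 + v\<^sup>2) / (2 * D)"
    using sx sy D by (simp_all add: field_simps power2_eq_square)
  have "(a\<^sup>2 + u\<^sup>2) / (2 * D) + - 2 * rho p * (rho q * a * b + u * v) / (2 * D) + (b\<^sup>2 + v\<^sup>2) / (2 * D)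
      = ((a\<^sup>2 + u\<^sup>2) + - 2 * rho p * (rho q * a * b + u * v) + (b\<^sup>2 + v\<^sup>2)) / (2 * D)"
    by (simp only: add_divide_distrib)
  also have "(a\<^sup>2 + u\<^sup>2) + - 2 * rho p * (rho q * a * b + u * v) + (b\<^sup>2 + v\<^sup>2)
      = (a\<^sup>2 - 2 * rho p * rho q * a * b + b\<^sup>2) + (v - rho p * u)\<^sup>2 + u\<^sup>2 * D"
    by (simp add: D_def power2_eq_square algebra_simps)
  also have "\<dots> / (2 * D)
      = (a\<^sup>2 - 2 * rho p * rho q * a * b + b\<^sup>2) / (2 * D) + (v - rho p * u)\<^sup>2 / (2 * D) + u\<^sup>2 / 2"
    using D by (simp add: add_divide_distrib)
  finally have mean: "bvn_quad_mean q (mX p) (mY p) 0 (1 / (2 * D * (sX p)\<^sup>2))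
      (- rho p / (D * sX p * sY p)) (1 / (2 * D * (sY p)\<^sup>2))
      = (a\<^sup>2 - 2 * rho p * rho q * a * b + b\<^sup>2) / (2 * D) + (v - rho p * u)\<^sup>2 / (2 * D) + u\<^sup>2 / 2"
    unfolding bvn_quad_mean_def q_params terms by simp
  show ?thesis
    unfolding bvn_form_def D_def[symmetric] a_def[symmetric] b_def[symmetric] u_def[symmetric] v_def[symmetric]
    by (subst mean[symmetric]) (rule has_bochner_integral_bvn_quad[OF q])
qed

text \<open>The relative entropy between the centred versions of q and p.\<close>

definition shape_divergence :: "bvn \<Rightarrow> bvn \<Rightarrow> real" where
  "shape_divergence q p = ln (bvn_norm p) - ln (bvn_norm q) - 1
     + ((sX q / sX p)\<^sup>2 - 2 * rho p * rho q * (sX q / sX p) * (sY q / sY p) + (sY q / sY p)\<^sup>2)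
         / (2 * (1 - (rho p)\<^sup>2))"

lemma rel_entropy_bvn:
  assumes p: "valid_bvn p" and q: "valid_bvn q"
  shows "rel_entropy q p = shape_divergence q p
     + ((mY q - mY p) / sY p - rho p * ((mX q - mX p) / sX p))\<^sup>2 / (2 * (1 - (rho p)\<^sup>2))
     + ((mX q - mX p) / sX p)\<^sup>2 / 2"
proof -
  have "(\<lambda>z. bvn_density q z * (ln (bvn_density q z) - ln (bvn_density p z)))
      = (\<lambda>z. (ln (bvn_norm p) - ln (bvn_norm q)) * bvn_density q z
             + (bvn_density q z * bvn_form p z - bvn_density q z * bvn_form q z))"
    by (simp add: fun_eq_iff ln_bvn_density[OF p] ln_bvn_density[OF q] algebra_simps)
  moreover have "((sX q / sX q)\<^sup>2 - 2 * rho q * rho q * (sX q / sX q) * (sY q / sY q) + (sY q / sY q)\<^sup>2)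
        / (2 * (1 - (rho q)\<^sup>2)) = 1"
    using q valid_bvn_one_minus_rho_sq_pos[OF q] by (simp add: valid_bvn_def power2_eq_square)
  then have "has_bochner_integral lborel (\<lambda>z. bvn_density q z * bvn_form q z) 1"
    using has_bochner_integral_bvn_form[OF q q] by simp
  ultimately have "has_bochner_integral lborel
      (\<lambda>z. bvn_density q z * (ln (bvn_density q z) - ln (bvn_density p z)))
      ((ln (bvn_norm p) - ln (bvn_norm q)) * 1
        + ((((sX q / sX p)\<^sup>2 - 2 * rho p * rho q * (sX q / sX p) * (sY q / sY p) + (sY q / sY p)\<^sup>2)
              / (2 * (1 - (rho p)\<^sup>2))
           + ((mY q - mY p) / sY p - rho p * ((mX q - mX p) / sX p))\<^sup>2 / (2 * (1 - (rho p)\<^sup>2))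
           + ((mX q - mX p) / sX p)\<^sup>2 / 2) - 1))"
    using has_bochner_integral_bvn_density[OF q] has_bochner_integral_bvn_form[OF p q]
    by (simp only:) (intro has_bochner_integral_add has_bochner_integral_diff has_bochner_integral_mult_right)
  then show ?thesis
    unfolding rel_entropy_def shape_divergence_def by (simp add: has_bochner_integral_iff)
qed

lemma sqrt_one_minus_square_mult_le:
  fixes r s :: real
  assumes "\<bar>r\<bar> \<le> 1" "\<bar>s\<bar> \<le> 1"
  shows "sqrt (1 - r\<^sup>2) * sqrt (1 - s\<^sup>2) \<le> 1 - r * s"
proof -
  have "\<bar>r * s\<bar> \<le> 1"
    using assms by (simp add: abs_mult mult_le_one)
  then have "0 \<le> 1 - r * s"
    by linarith
  moreover have "(1 - r * s)\<^sup>2 - (1 - r\<^sup>2) * (1 - s\<^sup>2) = (r - s)\<^sup>2"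
    by (simp add: power2_eq_square algebra_simps)
  then have "sqrt ((1 - r\<^sup>2) * (1 - s\<^sup>2)) \<le> sqrt ((1 - r * s)\<^sup>2)"
    using zero_le_power2[of "r - s"] by (intro real_sqrt_le_mono) linarith
  ultimately show ?thesis
    by (simp add: real_sqrt_mult)
qed

lemma sqrt_one_minus_square_mult_eq_iff:
  fixes r s :: real
  assumes "\<bar>r\<bar> \<le> 1" "\<bar>s\<bar> \<le> 1"
  shows "sqrt (1 - r\<^sup>2) * sqrt (1 - s\<^sup>2) = 1 - r * s \<longleftrightarrow> r = s"
proof
  assume eq: "sqrt (1 - r\<^sup>2) * sqrt (1 - s\<^sup>2) = 1 - r * s"
  have "0 \<le> 1 - r\<^sup>2" "0 \<le> 1 - s\<^sup>2"
    using assms by (simp_all add: abs_square_le_1)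
  then have "(1 - r\<^sup>2) * (1 - s\<^sup>2) = (1 - r * s)\<^sup>2"
    using arg_cong[OF eq, of "\<lambda>t. t\<^sup>2"] by (simp add: power_mult_distrib)
  then have "(r - s)\<^sup>2 = 0"
    by (simp add: power2_eq_square algebra_simps)
  then show "r = s"
    by simp
next
  assume "r = s"
  then show "sqrt (1 - r\<^sup>2) * sqrt (1 - s\<^sup>2) = 1 - r * s"
    using assms by (simp add: abs_square_le_1 power2_eq_square[symmetric])
qed

lemma shape_divergence_decomposition:
  assumes p: "valid_bvn p" and q: "valid_bvn q"
  defines "a \<equiv> sX q / sX p" and "b \<equiv> sY q / sY p"
    and "w \<equiv> (sX q / sX p) * (sY q / sY p) * (1 - rho p * rho q) / (1 - (rho p)\<^sup>2)"
    and "g \<equiv> (1 - rho p * rho q) / (sqrt (1 - (rho p)\<^sup>2) * sqrt (1 - (rho q)\<^sup>2))"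
  shows "shape_divergence q p = (a - b)\<^sup>2 / (2 * (1 - (rho p)\<^sup>2)) + (w - 1 - ln w) + ln g"
    and "0 < w" and "1 \<le> g"
proof -
  define sp where "sp = sqrt (1 - (rho p)\<^sup>2)"
  define sq where "sq = sqrt (1 - (rho q)\<^sup>2)"
  have pos: "0 < sX p" "0 < sY p" "0 < sX q" "0 < sY q" "0 < sp" "0 < sq"
    using p q valid_bvn_one_minus_rho_sq_pos[OF p] valid_bvn_one_minus_rho_sq_pos[OF q]
    by (auto simp: valid_bvn_def sp_def sq_def)
  have D: "1 - (rho p)\<^sup>2 = sp\<^sup>2"
    using valid_bvn_one_minus_rho_sq_pos[OF p] by (simp add: sp_def)
  have "sp * sq \<le> 1 - rho p * rho q"
    unfolding sp_def sq_def using p q by (intro sqrt_one_minus_square_mult_le) (auto simp: valid_bvn_def)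
  then show "1 \<le> g"
    using pos by (simp add: g_def sp_def[symmetric] sq_def[symmetric])
  moreover have "0 < sp * sq"
    using pos by simp
  ultimately have c: "0 < 1 - rho p * rho q"
    using \<open>sp * sq \<le> 1 - rho p * rho q\<close> by linarith
  then show w: "0 < w"
    using pos by (simp add: w_def a_def b_def D)
  have "0 < g"
    using \<open>1 \<le> g\<close> by linarith
  have "bvn_norm q * g = bvn_norm p * w"
    using pos unfolding bvn_norm_def g_def w_def a_def b_def sp_def[symmetric] sq_def[symmetric] D
    by (simp add: field_simps power2_eq_square)
  then have "ln (bvn_norm q) + ln g = ln (bvn_norm p) + ln w"
    using bvn_norm_pos[OF p] bvn_norm_pos[OF q] \<open>0 < g\<close> w by (metis ln_mult_pos)
  moreover have "(a\<^sup>2 - 2 * rho p * rho q * a * b + b\<^sup>2) / (2 * sp\<^sup>2) = (a - b)\<^sup>2 / (2 * sp\<^sup>2) + w"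
    using pos unfolding w_def a_def b_def D by (simp add: field_simps power2_eq_square)
  ultimately show "shape_divergence q p = (a - b)\<^sup>2 / (2 * (1 - (rho p)\<^sup>2)) + (w - 1 - ln w) + ln g"
    unfolding shape_divergence_def a_def[symmetric] b_def[symmetric] D by (simp add: power_divide)
qed

lemma shape_divergence_nonneg:
  assumes "valid_bvn p" "valid_bvn q"
  shows "0 \<le> shape_divergence q p"
proof -
  note decomp = shape_divergence_decomposition[OF assms]
  have "0 \<le> (sX q / sX p - sY q / sY p)\<^sup>2 / (2 * (1 - (rho p)\<^sup>2))"
    using valid_bvn_one_minus_rho_sq_pos[OF assms(1)] by simp
  moreover note ln_le_minus_one[OF decomp(2)] ln_ge_zero[OF decomp(3)]
  ultimately show ?thesis
    unfolding decomp(1) by linarith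
qed

lemma shape_divergence_eq_0_iff:
  assumes p: "valid_bvn p" and q: "valid_bvn q"
  shows "shape_divergence q p = 0 \<longleftrightarrow> sX q = sX p \<and> sY q = sY p \<and> rho q = rho p"
proof
  define a where "a = sX q / sX p"
  define b where "b = sY q / sY p"
  define w where "w = a * b * (1 - rho p * rho q) / (1 - (rho p)\<^sup>2)"
  define g where "g = (1 - rho p * rho q) / (sqrt (1 - (rho p)\<^sup>2) * sqrt (1 - (rho q)\<^sup>2))"
  note decomp = shape_divergence_decomposition[OF p q, folded a_def b_def, folded w_def g_def]
  have pos: "0 < sX p" "0 < sY p" "0 < sX q" "0 < sY q" "0 < 1 - (rho p)\<^sup>2"
    using p q valid_bvn_one_minus_rho_sq_pos[OF p] by (auto simp: valid_bvn_def)
  assume "shape_divergence q p = 0"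
  moreover have "0 \<le> (a - b)\<^sup>2 / (2 * (1 - (rho p)\<^sup>2))"
    using pos by simp
  moreover note ln_le_minus_one[OF decomp(2)] ln_ge_zero[OF decomp(3)]
  ultimately have "(a - b)\<^sup>2 / (2 * (1 - (rho p)\<^sup>2)) = 0" "ln w = w - 1" "ln g = 0"
    unfolding decomp(1) by linarith+
  then have "a = b" "w = 1" "g = 1"
    using pos decomp(2,3) ln_eq_minus_one by auto
  have "sqrt (1 - (rho p)\<^sup>2) * sqrt (1 - (rho q)\<^sup>2) = 1 - rho p * rho q"
    using \<open>g = 1\<close> pos(5) by (simp add: g_def split: if_splits)
  then have "rho q = rho p"
    using p q by (subst (asm) sqrt_one_minus_square_mult_eq_iff) (auto simp: valid_bvn_def)
  then have "a\<^sup>2 = 1"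
    using \<open>w = 1\<close> \<open>a = b\<close> pos(5) by (simp add: w_def power2_eq_square)
  moreover have "0 < a"
    using pos by (simp add: a_def)
  ultimately have "a = 1"
    by (auto simp: power2_eq_1_iff)
  then show "sX q = sX p \<and> sY q = sY p \<and> rho q = rho p"
    using \<open>a = b\<close> \<open>rho q = rho p\<close> pos by (simp add: a_def b_def)
next
  assume "sX q = sX p \<and> sY q = sY p \<and> rho q = rho p"
  then show "shape_divergence q p = 0"
    using p valid_bvn_one_minus_rho_sq_pos[OF p]
    by (simp add: shape_divergence_def bvn_norm_def valid_bvn_def field_simps power2_eq_square)
qed

definition mean_shift :: "bvn \<Rightarrow> real \<Rightarrow> bvn" where
  "mean_shift p m = p\<lparr>mX := m, mY := cond_mean p m\<rparr>"

lemma valid_mean_shift: "valid_bvn p \<Longrightarrow> valid_bvn (mean_shift p m)"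
  by (simp add: mean_shift_def valid_bvn_def)

lemma rel_entropy_mean_shift:
  assumes "valid_bvn p"
  shows "rel_entropy (mean_shift p m) p = ((m - mX p) / sX p)\<^sup>2 / 2"
proof -
  have "shape_divergence (mean_shift p m) p = 0"
    using assms valid_mean_shift[OF assms] by (simp add: shape_divergence_eq_0_iff mean_shift_def)
  moreover have "(cond_mean p m - mY p) / sY p - rho p * ((m - mX p) / sX p) = 0"
    using assms by (simp add: cond_mean_def valid_bvn_def field_simps)
  ultimately show ?thesis
    using rel_entropy_bvn[OF assms valid_mean_shift[OF assms]] by (simp add: mean_shift_def)
qed

lemma rel_entropy_ge_mean_term:
  assumes "valid_bvn p" "valid_bvn q"
  shows "((mX q - mX p) / sX p)\<^sup>2 / 2 \<le> rel_entropy q p"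
  using rel_entropy_bvn[OF assms] shape_divergence_nonneg[OF assms] valid_bvn_one_minus_rho_sq_pos[OF assms(1)]
  by simp

lemma rel_entropy_le_mean_term_imp_eq_mean_shift:
  assumes p: "valid_bvn p" and q: "valid_bvn q"
    and le: "rel_entropy q p \<le> ((mX q - mX p) / sX p)\<^sup>2 / 2"
  shows "q = mean_shift p (mX q)"
proof -
  have nonneg: "0 \<le> ((mY q - mY p) / sY p - rho p * ((mX q - mX p) / sX p))\<^sup>2 / (2 * (1 - (rho p)\<^sup>2))"
    using valid_bvn_one_minus_rho_sq_pos[OF p] by simp
  then have "shape_divergence q p = 0"
    using le rel_entropy_bvn[OF p q] shape_divergence_nonneg[OF p q] by linarith
  then have shape: "sX q = sX p" "sY q = sY p" "rho q = rho p"
    using shape_divergence_eq_0_iff[OF p q] by auto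
  have "((mY q - mY p) / sY p - rho p * ((mX q - mX p) / sX p))\<^sup>2 / (2 * (1 - (rho p)\<^sup>2)) = 0"
    using le nonneg rel_entropy_bvn[OF p q] shape_divergence_nonneg[OF p q] by linarith
  then have "mY q = cond_mean p (mX q)"
    using p valid_bvn_one_minus_rho_sq_pos[OF p] by (simp add: cond_mean_def valid_bvn_def field_simps)
  then show ?thesis
    using shape by (simp add: mean_shift_def)
qed

definition unique_nearest :: "(real \<Rightarrow> bool) \<Rightarrow> real \<Rightarrow> real \<Rightarrow> bool" where
  "unique_nearest V c m \<longleftrightarrow> V m \<and> (\<forall>x. V x \<and> x \<noteq> m \<longrightarrow> \<bar>m - c\<bar> < \<bar>x - c\<bar>)"

lemma unique_nearest_eq: "unique_nearest (\<lambda>x. x = m) c m"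
  by (simp add: unique_nearest_def)

lemma unique_nearest_le: "unique_nearest (\<lambda>x. x \<le> \<mu>) c (min c \<mu>)"
  by (auto simp: unique_nearest_def)

lemma unique_nearest_ge: "unique_nearest (\<lambda>x. \<mu> \<le> x) c (max c \<mu>)"
  by (auto simp: unique_nearest_def)

lemma is_posterior_mean_view_iff:
  assumes p: "valid_bvn p" and nearest: "unique_nearest V (mX p) m"
  shows "is_posterior p (\<lambda>q. V (mX q)) q \<longleftrightarrow> q = mean_shift p m"
proof -
  define cost where "cost x = ((x - mX p) / sX p)\<^sup>2 / 2" for x
  have "0 < sX p"
    using p by (simp add: valid_bvn_def)
  have cost_less: "cost m < cost x" if "V x" "x \<noteq> m" for x
  proof -
    have "\<bar>m - mX p\<bar> < \<bar>x - mX p\<bar>"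
      using nearest that by (simp add: unique_nearest_def)
    then have "(m - mX p)\<^sup>2 < (x - mX p)\<^sup>2"
      by (metis abs_le_square_iff not_le)
    then show ?thesis
      using \<open>0 < sX p\<close> by (simp add: cost_def power_divide divide_strict_right_mono)
  qed
  have "V m"
    using nearest by (simp add: unique_nearest_def)
  have shift: "valid_bvn (mean_shift p m)" "mX (mean_shift p m) = m" "rel_entropy (mean_shift p m) p = cost m"
    using valid_mean_shift[OF p] rel_entropy_mean_shift[OF p] by (simp_all add: mean_shift_def cost_def)
  show ?thesis
  proof
    assume post: "is_posterior p (\<lambda>q. V (mX q)) q"
    then have q: "valid_bvn q" "V (mX q)" and "rel_entropy q p \<le> cost m"
      using shift \<open>V m\<close> unfolding is_posterior_def by fastforce+
    moreover have "cost (mX q) \<le> rel_entropy q p"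
      using rel_entropy_ge_mean_term[OF p q(1)] by (simp add: cost_def)
    ultimately have "mX q = m"
      using cost_less by fastforce
    moreover have "q = mean_shift p (mX q)"
      using rel_entropy_le_mean_term_imp_eq_mean_shift[OF p q(1)] \<open>rel_entropy q p \<le> cost m\<close> \<open>mX q = m\<close>
      by (simp add: cost_def)
    ultimately show "q = mean_shift p m"
      by simp
  next
    assume "q = mean_shift p m"
    moreover have "cost m \<le> rel_entropy q' p" if "valid_bvn q'" "V (mX q')" for q'
      using cost_less[of "mX q'"] rel_entropy_ge_mean_term[OF p that(1)] that(2)
      by (cases "mX q' = m") (auto simp: cost_def)
    ultimately show "is_posterior p (\<lambda>q. V (mX q)) q"
      using shift \<open>V m\<close> by (simp add: is_posterior_def)
  qed
qed

lemma CoVaR_is_mean_view: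
  assumes "valid_bvn p" and "unique_nearest V (mX p) m"
  shows "CoVaR_is \<alpha> p (\<lambda>q. V (mX q)) (cond_mean p m + sY p * Phi_inv \<alpha>)"
  using is_posterior_mean_view_iff[OF assms]
  by (simp add: CoVaR_is_def CoVaR_post_def mean_shift_def)

theorem theorem3p1:
  fixes p :: bvn and \<mu>1 \<alpha> c_eq :: real
  assumes "valid_bvn p" and "0 < \<alpha>" and "\<alpha> < 1"
  assumes "c_eq = mY p + rho p * (\<mu>1 - mX p) * sY p / sX p + sY p * Phi_inv \<alpha>"
  shows "CoVaR_is \<alpha> p (\<lambda>q. mX q = \<mu>1) c_eq
    \<and> (mX p \<le> \<mu>1 \<longrightarrow> CoVaR_is \<alpha> p (\<lambda>q. mX q \<le> \<mu>1) (VaR \<alpha> p))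
    \<and> (mX p > \<mu>1 \<longrightarrow> CoVaR_is \<alpha> p (\<lambda>q. mX q \<le> \<mu>1) c_eq)
    \<and> (mX p \<ge> \<mu>1 \<longrightarrow> CoVaR_is \<alpha> p (\<lambda>q. mX q \<ge> \<mu>1) (VaR \<alpha> p))
    \<and> (mX p < \<mu>1 \<longrightarrow> CoVaR_is \<alpha> p (\<lambda>q. mX q \<ge> \<mu>1) c_eq)"
proof -
  have c_eq: "cond_mean p \<mu>1 + sY p * Phi_inv \<alpha> = c_eq"
    using assms(4) by (simp add: cond_mean_def)
  have VaR: "cond_mean p (mX p) + sY p * Phi_inv \<alpha> = VaR \<alpha> p"
    by (simp add: cond_mean_def VaR_def)
  note eq = CoVaR_is_mean_view[OF assms(1) unique_nearest_eq[of \<mu>1], where \<alpha> = \<alpha>]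
  note le = CoVaR_is_mean_view[OF assms(1) unique_nearest_le[of \<mu>1], where \<alpha> = \<alpha>]
  note ge = CoVaR_is_mean_view[OF assms(1) unique_nearest_ge[of \<mu>1], where \<alpha> = \<alpha>]
  show ?thesis
    using eq le ge by (auto simp: min_def max_def c_eq VaR)
qed

end
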